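(* Let $A$ be admissible and $\ell>0$ with $A(x)=A_\infty$ for all $x>\ell$. Let $\phi\in C_c^\infty(\mathbb{R})$ with $\operatorname{supp}\phi\subset(0,\infty)$ and let $u=u_\phi\in C^\infty([0,\infty)\times\mathbb{R})$ satisfy $\square_Au=0$ in $(0,\infty)\times\mathbb{R}$, $\partial_xu(0,t)=\phi(t)$ for $t\in\mathbb{R}$, and $u=0$ in $(0,\infty)\times(-\infty,0)$. Then there are constants $C,C'>0$ such that $$|u(0,t)-c(t)|\le Ce^{-C't}\quad\text{for all }t\in\mathbb{R},\qquad c(t):=-\frac{1}{A_\infty}\int_0^t\phi(s)\,ds.$$
   Context: A function $A:\mathbb{R}\to\mathbb{R}$ is admissible if $A\in C^\infty(\mathbb{R})$, $A>0$, and there are $x_+>x_->0$ and $A_\infty>0$ with $A(x)=1$ for $x<x_-$ and $A(x)=A_\infty$ for $x>x_+$. $\square_Au:=\partial_t^2u-\frac{1}{A(x)}\partial_x(A(x)\partial_xu)$. *)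

theory Defs
  imports "HOL-Analysis.Analysis"
begin

definition smooth_real :: "(real \<Rightarrow> real) \<Rightarrow> bool" where
  "smooth_real f \<longleftrightarrow> (\<forall>k x. ((deriv ^^ k) f) differentiable (at x))"

fun Ck_plane :: "nat \<Rightarrow> (real \<times> real \<Rightarrow> real) \<Rightarrow> bool" where
  "Ck_plane 0 f = continuous_on UNIV f"
| "Ck_plane (Suc k) f = (\<exists>f1 f2.
      (\<forall>p. (f has_derivative (\<lambda>h. f1 p * fst h + f2 p * snd h)) (at p))
      \<and> Ck_plane k f1 \<and> Ck_plane k f2)"

definition smooth_plane :: "(real \<times> real \<Rightarrow> real) \<Rightarrow> bool" where
  "smooth_plane f \<longleftrightarrow> (\<forall>k. Ck_plane k f)"

text \<open>u(x,t) is C-infinity on the closed half plane [0,\<infinity>) \<times> \<real>: it is the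
  restriction of a C-infinity function on the whole plane.\<close>
definition smooth_halfplane :: "(real \<Rightarrow> real \<Rightarrow> real) \<Rightarrow> bool" where
  "smooth_halfplane u \<longleftrightarrow>
     (\<exists>U. smooth_plane U \<and> (\<forall>x t. 0 \<le> x \<longrightarrow> U (x, t) = u x t))"

definition admissible :: "(real \<Rightarrow> real) \<Rightarrow> real \<Rightarrow> bool" where
  "admissible A Ainf \<longleftrightarrow> smooth_real A \<and> (\<forall>x. A x > 0) \<and> Ainf > 0 \<and>
     (\<exists>xm xp. 0 < xm \<and> xm < xp \<and> (\<forall>x. x < xm \<longrightarrow> A x = 1) \<and>
                                   (\<forall>x. x > xp \<longrightarrow> A x = Ainf))"

definition boxA :: "(real \<Rightarrow> real) \<Rightarrow> (real \<Rightarrow> real \<Rightarrow> real) \<Rightarrow> real \<Rightarrow> real \<Rightarrow> real" where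
  "boxA A u x t = deriv (\<lambda>s. deriv (\<lambda>r. u x r) s) t
      - (1 / A x) * deriv (\<lambda>y. A y * deriv (\<lambda>z. u z t) y) x"

end

theory Submission
  imports Defs
begin

text \<open>Extend u to a C^2 function U on the plane.  Beyond x = l the equation is the flat wave
  equation, and since U vanishes in the past, transport along characteristics gives the outgoing
  condition U_x + U_t = 0 there.  Using the equation, the Neumann datum and the outgoing
  condition, \<open>Ainf U(L,t) + \<integral>\<^sub>0\<^sup>L A U_t dx + \<integral>\<^sub>0\<^sup>t \<phi>\<close> is constant in t for L > l, hence
  zero; together with \<open>U(L,t) - U(0,t) = \<integral>\<^sub>0\<^sup>L U_x dx\<close> this writes u(0,t) - c(t) as an
  integral of U_x and U_t over [0,L].  Once \<phi> has switched off, the weighted energy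
  \<open>\<integral>\<^sub>0\<^sup>L A ((1+h)(U_x+U_t)^2 + (1-h)(U_t-U_x)^2) dx\<close> with the small increasing weight
  h(x) = \<delta> exp(\<nu> x) decays exponentially: its flux has the right sign at both ends, and
  h' = \<nu> h absorbs the term coming from A'.  Finally |y| \<le> (\<lambda> y^2 + 1/\<lambda>)/2 with
  \<lambda> = exp(\<kappa> t / 2) turns the energy decay into exponential decay of u(0,t) - c(t).\<close>

lemma has_real_derivative_fst_slice:
  assumes "\<forall>p. (f has_derivative (\<lambda>h. f1 p * fst h + f2 p * snd h)) (at p)"
  shows "((\<lambda>x. f (x, t)) has_real_derivative f1 (x, t)) (at x)"
proof -
  have "((\<lambda>x. (x, t)) has_derivative (\<lambda>h. (h, 0))) (at x)"
    by (auto intro!: derivative_eq_intros)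
  from has_derivative_compose[OF this, of f] assms
  have "((\<lambda>x. f (x, t)) has_derivative (\<lambda>h. f1 (x, t) * h)) (at x)"
    by fastforce
  then show ?thesis by (simp add: has_field_derivative_def mult_commute_abs)
qed

lemma has_real_derivative_snd_slice:
  assumes "\<forall>p. (f has_derivative (\<lambda>h. f1 p * fst h + f2 p * snd h)) (at p)"
  shows "((\<lambda>t. f (x, t)) has_real_derivative f2 (x, t)) (at t)"
proof -
  have "((\<lambda>t. (x, t)) has_derivative (\<lambda>h. (0, h))) (at t)"
    by (auto intro!: derivative_eq_intros)
  from has_derivative_compose[OF this, of f] assms
  have "((\<lambda>t. f (x, t)) has_derivative (\<lambda>h. f2 (x, t) * h)) (at t)"
    by fastforce
  then show ?thesis by (simp add: has_field_derivative_def mult_commute_abs)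
qed

lemma continuous_on_fst_slice:
  "continuous_on UNIV F \<Longrightarrow> continuous_on S (\<lambda>x. F (x, t))"
  by (rule continuous_on_compose2[OF _ continuous_on_Pair[OF continuous_on_id continuous_on_const]])
     auto

lemma continuous_on_comp_swap:
  "continuous_on UNIV F \<Longrightarrow> continuous_on S (\<lambda>z. F (snd z, fst z))"
  by (rule continuous_on_compose2[OF _ continuous_on_Pair[OF continuous_on_snd continuous_on_fst]])
     (auto intro: continuous_on_id)

lemma continuous_on_snd_comp:
  "continuous_on UNIV f \<Longrightarrow> continuous_on S (\<lambda>z. f (snd z))"
  by (rule continuous_on_compose2[OF _ continuous_on_snd[OF continuous_on_id]]) auto

lemma has_real_derivative_locally_zero:
  fixes f :: "real \<Rightarrow> real"
  assumes "(f has_real_derivative D) (at x)" "open S" "x \<in> S" "\<And>y. y \<in> S \<Longrightarrow> f y = 0"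
  shows "D = 0"
proof -
  have "((\<lambda>y. 0) has_real_derivative D) (at x)"
    by (rule has_field_derivative_transform_within_open[OF assms(1-3)]) (use assms(4) in auto)
  then show ?thesis using DERIV_const DERIV_unique by blast
qed

lemma has_integral_real_derivative_interior:
  fixes f :: "real \<Rightarrow> real"
  assumes "a \<le> b" "continuous_on {a..b} f"
    and "\<And>x. a < x \<Longrightarrow> x < b \<Longrightarrow> (f has_real_derivative f' x) (at x)"
  shows "(f' has_integral (f b - f a)) {a..b}"
  using fundamental_theorem_of_calculus_interior[OF assms(1,2)] assms(3)
  by (simp add: has_real_derivative_iff_has_vector_derivative)

lemma has_real_derivative_parametric_integral:
  fixes f fs :: "real \<Rightarrow> real \<Rightarrow> real"
  assumes "\<And>s x. ((\<lambda>s. f s x) has_real_derivative fs s x) (at s)"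
    and "\<And>s. continuous_on {a..b} (f s)"
    and "continuous_on UNIV (\<lambda>z. fs (fst z) (snd z))"
  shows "((\<lambda>s. integral {a..b} (f s)) has_real_derivative integral {a..b} (fs t)) (at t)"
proof -
  have "((\<lambda>s. integral (cbox a b) (f s)) has_real_derivative integral (cbox a b) (fs t))
          (at t within UNIV)"
  proof (rule leibniz_rule_field_derivative)
    show "continuous_on (UNIV \<times> cbox a b) (\<lambda>(s, x). fs s x)"
      using continuous_on_subset[OF assms(3)] by (simp add: split_beta)
  qed (use assms(1) integrable_continuous_interval[OF assms(2)] in auto)
  then show ?thesis by (simp add: cbox_interval)
qed

lemma interval_integral_has_real_derivative:
  fixes f :: "real \<Rightarrow> real"
  assumes "continuous_on UNIV f"
  shows "((\<lambda>t. LBINT s=0..t. f s) has_real_derivative f t) (at t)"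
proof -
  define r where "r = \<bar>t\<bar> + 1"
  have "((\<lambda>u. LBINT s=0..u. f s) has_vector_derivative f t) (at t within {-r..r})"
    using interval_integral_FTC2[where a="-r" and b=r and c=0 and f=f and x=t]
      continuous_on_subset[OF assms] by (auto simp: r_def zero_ereal_def)
  moreover have "at t within {-r..r} = at t"
    by (rule at_within_Icc_at) (auto simp: r_def)
  ultimately show ?thesis by (simp add: has_real_derivative_iff_has_vector_derivative)
qed

lemma abs_le_AM_GM:
  fixes y lam :: real
  assumes "0 < lam"
  shows "\<bar>y\<bar> \<le> (lam * y^2 + 1 / lam) / 2"
proof -
  have "(lam * y^2 + 1 / lam) / 2 - \<bar>y\<bar> = (lam * \<bar>y\<bar> - 1)^2 / (2 * lam)"
    using assms by (simp add: field_simps power2_eq_square)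
  moreover have "0 \<le> (lam * \<bar>y\<bar> - 1)^2 / (2 * lam)"
    using assms by simp
  ultimately show ?thesis by linarith
qed

lemma abs_mult_le_sum_squares:
  fixes p q :: real
  shows "\<bar>2 * p * q\<bar> \<le> p^2 + q^2"
  using sum_squares_bound[of p q] sum_squares_bound[of p "-q"]
  by (auto simp: abs_if power2_eq_square)

lemma energy_density_dissipation:
  fixes a a' h nu delta p q :: real
  assumes a: "0 < a" and a': "\<bar>a'\<bar> \<le> nu * a / 2"
    and h: "0 < delta" "delta \<le> h" "h \<le> 1/2"
  shows "- 2 * h * a' * p * q - a * nu * h * (p^2 + q^2)
           \<le> - (nu * delta / 4) * (a * ((1 + h) * p^2 + (1 - h) * q^2))"
proof -
  have "0 \<le> nu * a" using a' by linarith
  then have nu: "0 \<le> nu" using a by (simp add: zero_le_mult_iff)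
  have "\<bar>2 * h * a' * p * q\<bar> = h * \<bar>a'\<bar> * \<bar>2 * p * q\<bar>"
    using h by (simp add: abs_mult)
  also have "\<dots> \<le> h * (nu * a / 2) * (p^2 + q^2)"
    using h a' abs_mult_le_sum_squares[of p q] by (intro mult_mono mult_left_mono) auto
  finally have cross: "- 2 * h * a' * p * q \<le> a * nu * h * (p^2 + q^2) / 2"
    by (simp add: algebra_simps)
  have "delta * (1 + h) \<le> h * 2" "delta * (1 - h) \<le> h * 2"
    using h by (intro mult_mono; simp)+
  then have "nu * (delta * (1 + h)) \<le> nu * (h * 2)" "nu * (delta * (1 - h)) \<le> nu * (h * 2)"
    using nu by (auto intro: mult_left_mono)
  then have "nu * delta / 4 * (1 + h) \<le> nu * h / 2" "nu * delta / 4 * (1 - h) \<le> nu * h / 2"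
    by (simp_all add: algebra_simps)
  have "nu * delta / 4 * (a * ((1 + h) * p^2 + (1 - h) * q^2))
          = a * (nu * delta / 4 * (1 + h) * p^2 + nu * delta / 4 * (1 - h) * q^2)"
    by (simp add: field_simps)
  also have "\<dots> \<le> a * (nu * h / 2 * p^2 + nu * h / 2 * q^2)"
    using a \<open>nu * delta / 4 * (1 + h) \<le> nu * h / 2\<close> \<open>nu * delta / 4 * (1 - h) \<le> nu * h / 2\<close>
    by (intro mult_left_mono add_mono mult_right_mono) auto
  also have "\<dots> = a * nu * h * (p^2 + q^2) / 2"
    by (simp add: algebra_simps)
  finally have "nu * delta / 4 * (a * ((1 + h) * p^2 + (1 - h) * q^2)) \<le> a * nu * h * (p^2 + q^2) / 2" .
  with cross show ?thesis
    by linarith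
qed

lemma abs_add_abs_le_weighted_squares:
  fixes a amin h lam p q :: real
  assumes a: "0 < amin" "amin \<le> a" and h: "0 \<le> h" "h \<le> 1/2" and lam: "0 < lam"
  shows "\<bar>p\<bar> + \<bar>q\<bar> \<le> lam / amin * (a * ((1 + h) * p^2 + (1 - h) * q^2)) + 1 / lam"
proof -
  have "amin * ((p^2 + q^2) / 2) \<le> a * ((1 + h) * p^2 + (1 - h) * q^2)"
  proof (rule mult_mono)
    show "(p^2 + q^2) / 2 \<le> (1 + h) * p^2 + (1 - h) * q^2"
      using mult_right_mono[of "1/2" "1 + h" "p^2"] mult_right_mono[of "1/2" "1 - h" "q^2"] h
      by simp
  qed (use a h in auto)
  then have "lam / amin * (amin * ((p^2 + q^2) / 2))
               \<le> lam / amin * (a * ((1 + h) * p^2 + (1 - h) * q^2))"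
    using a lam by (intro mult_left_mono) auto
  then have "lam * (p^2 + q^2) / 2 \<le> lam / amin * (a * ((1 + h) * p^2 + (1 - h) * q^2))"
    using a by simp
  moreover have "\<bar>p\<bar> + \<bar>q\<bar> \<le> lam * (p^2 + q^2) / 2 + 1 / lam"
    using abs_le_AM_GM[OF lam, of p] abs_le_AM_GM[OF lam, of q] by (simp add: field_simps)
  ultimately show ?thesis
    by linarith
qed

lemma abs_trace_integrand_le:
  fixes a amin amax ainf h lam u1 u2 :: real
  assumes a: "0 < amin" "amin \<le> a" "a \<le> amax" and ainf: "0 < ainf"
    and h: "0 \<le> h" "h \<le> 1/2" and lam: "0 < lam"
  shows "\<bar>u1 + (1 / ainf) * (a * u2)\<bar>
           \<le> (1 + amax / ainf) * (lam / amin * (a * ((1 + h) * (u1 + u2)^2 + (1 - h) * (u2 - u1)^2))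
                                  + 1 / lam)"
proof -
  have K: "0 \<le> amax / ainf" using a ainf by simp
  have "\<bar>(1 / ainf) * (a * u2)\<bar> \<le> (amax / ainf) * \<bar>u2\<bar>"
    using a ainf by (simp add: abs_mult divide_right_mono mult_right_mono)
  then have "\<bar>u1 + (1 / ainf) * (a * u2)\<bar> \<le> \<bar>u1\<bar> + (amax / ainf) * \<bar>u2\<bar>"
    using abs_triangle_ineq[of u1 "(1 / ainf) * (a * u2)"] by linarith
  also have "\<dots> \<le> (1 + amax / ainf) * (\<bar>u1\<bar> + \<bar>u2\<bar>)"
    using mult_nonneg_nonneg[OF K abs_ge_zero[of u1]] by (simp add: algebra_simps)
  also have "\<dots> \<le> (1 + amax / ainf) * (\<bar>u1 + u2\<bar> + \<bar>u2 - u1\<bar>)"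
    using K by (intro mult_left_mono) auto
  also have "\<dots> \<le> (1 + amax / ainf) * (lam / amin * (a * ((1 + h) * (u1 + u2)^2 + (1 - h) * (u2 - u1)^2))
                                         + 1 / lam)"
    using K by (intro mult_left_mono abs_add_abs_le_weighted_squares a h lam) auto
  finally show ?thesis .
qed

lemma exp_mult_nonincreasing_of_dissipative:
  fixes V :: "real \<Rightarrow> real"
  assumes deriv: "\<And>s. \<exists>V'. (V has_real_derivative V') (at s) \<and> (T < s \<longrightarrow> V' \<le> - kappa * V s)"
    and "T \<le> t"
  shows "exp (kappa * t) * V t \<le> exp (kappa * T) * V T"
proof (rule DERIV_nonpos_imp_decreasing_open[OF \<open>T \<le> t\<close>])
  fix s assume s: "T < s" "s < t"
  obtain V' where V': "(V has_real_derivative V') (at s)" "V' \<le> - kappa * V s"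
    using deriv[of s] s by blast
  have "((\<lambda>s. exp (kappa * s) * V s) has_real_derivative exp (kappa * s) * (kappa * V s + V')) (at s)"
    by (auto intro!: derivative_eq_intros V'(1) simp: algebra_simps)
  moreover have "exp (kappa * s) * (kappa * V s + V') \<le> 0"
    using V'(2) by (intro mult_nonneg_nonpos) auto
  ultimately show "\<exists>y. ((\<lambda>s. exp (kappa * s) * V s) has_real_derivative y) (at s) \<and> y \<le> 0"
    by blast
next
  show "continuous_on {T..t} (\<lambda>s. exp (kappa * s) * V s)"
    using deriv by (intro continuous_intros) (meson DERIV_isCont continuous_at_imp_continuous_on)
qed

lemma exponential_decay_of_dissipative:
  fixes V :: "real \<Rightarrow> real"
  assumes deriv: "\<And>t. \<exists>V'. (V has_real_derivative V') (at t) \<and> (T < t \<longrightarrow> V' \<le> - kappa * V t)"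
    and past: "\<And>t. t \<le> 0 \<Longrightarrow> V t = 0"
    and T: "0 \<le> T" and kappa: "0 \<le> kappa"
  obtains B where "0 \<le> B" "\<And>t. V t \<le> B * exp (- kappa * t)"
proof -
  have "continuous_on {0..T} V"
    using deriv by (meson DERIV_isCont continuous_at_imp_continuous_on)
  then obtain M where M: "\<And>t. t \<in> {0..T} \<Longrightarrow> V t \<le> M" "V 0 \<le> M"
    using continuous_attains_sup[of "{0..T}" V] T by fastforce
  have M0: "0 \<le> M" using M(2) past[of 0] by simp
  show ?thesis
  proof
    show "0 \<le> M * exp (kappa * T)" using M0 by simp
    fix t
    have e: "M * exp (kappa * T) * exp (- kappa * t) = exp (kappa * (T - t)) * M"
      by (simp add: algebra_simps flip: exp_add)
    consider "t \<le> 0" | "0 < t" "t \<le> T" | "T < t" by linarith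
    then show "V t \<le> M * exp (kappa * T) * exp (- kappa * t)"
    proof cases
      case 1
      then show ?thesis using past M0 by simp
    next
      case 2
      then have "V t \<le> M" "1 \<le> exp (kappa * (T - t))" using M(1) kappa by auto
      then have "M \<le> exp (kappa * (T - t)) * M"
        using M0 by (simp add: mult_le_cancel_right1)
      with \<open>V t \<le> M\<close> show ?thesis unfolding e by linarith
    next
      case 3
      have "exp (kappa * T) * V T \<le> exp (kappa * T) * M"
        using M(1)[of T] T by (intro mult_left_mono) auto
      then have "exp (kappa * t) * V t \<le> exp (kappa * T) * M"
        using exp_mult_nonincreasing_of_dissipative[OF deriv, of t] 3 by linarith
      then have "V t \<le> exp (kappa * T) * M / exp (kappa * t)"
        by (simp add: field_simps)
      then show ?thesis unfolding e by (simp add: algebra_simps exp_diff)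
    qed
  qed
qed

lemma exp_weight_bounds:
  fixes nu delta r x :: real
  assumes "0 < nu" "0 < delta" "delta * exp (nu * r) \<le> 1/2" "x \<in> {0..r}"
  shows "delta \<le> delta * exp (nu * x)" "delta * exp (nu * x) \<le> 1/2"
proof -
  have "0 \<le> nu * x" "nu * x \<le> nu * r"
    using assms(1,4) by (auto intro: mult_left_mono)
  then have exp_ge: "1 \<le> exp (nu * x)" and le: "delta * exp (nu * x) \<le> delta * exp (nu * r)"
    using assms(2) by auto
  from exp_ge show "delta \<le> delta * exp (nu * x)"
    using assms(2) by simp
  from le show "delta * exp (nu * x) \<le> 1/2"
    using assms(3) by linarith
qed

lemma closure_quadrant:
  fixes x t :: real
  shows "0 \<le> x \<Longrightarrow> t \<le> 0 \<Longrightarrow> (x, t) \<in> closure ({0<..} \<times> {..<0})"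
  by (simp add: closure_Times)

text \<open>U extends the solution from the closed half plane x \<ge> 0 to the whole plane (arguments
  (x, t)); U1, U2 are its partial derivatives in x and t, and U11, U12, U21, U22 those of U1 and U2.\<close>
locale neumann_wave =
  fixes A A' :: "real \<Rightarrow> real" and Ainf l b :: real and \<phi> :: "real \<Rightarrow> real"
    and U U1 U2 U11 U12 U21 U22 :: "real \<times> real \<Rightarrow> real"
  assumes A_deriv: "\<And>x. (A has_real_derivative A' x) (at x)"
    and A'_cont: "continuous_on UNIV A'"
    and A_pos: "\<And>x. 0 < A x" and A_0: "A 0 = 1"
    and l_pos: "0 < l" and A_beyond: "\<And>x. l < x \<Longrightarrow> A x = Ainf"
    and \<phi>_cont: "continuous_on UNIV \<phi>" and \<phi>_late: "\<And>t. b < t \<Longrightarrow> \<phi> t = 0"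
    and U_deriv: "\<forall>p. (U has_derivative (\<lambda>h. U1 p * fst h + U2 p * snd h)) (at p)"
    and U1_deriv: "\<forall>p. (U1 has_derivative (\<lambda>h. U11 p * fst h + U12 p * snd h)) (at p)"
    and U2_deriv: "\<forall>p. (U2 has_derivative (\<lambda>h. U21 p * fst h + U22 p * snd h)) (at p)"
    and U11_cont: "continuous_on UNIV U11" and U12_cont: "continuous_on UNIV U12"
    and U22_cont: "continuous_on UNIV U22"
    and wave: "\<And>x t. 0 < x \<Longrightarrow> U22 (x, t) = U11 (x, t) + A' x / A x * U1 (x, t)"
    and neumann: "\<And>t. U1 (0, t) = \<phi> t"
    and past: "\<And>x t. 0 < x \<Longrightarrow> t < 0 \<Longrightarrow> U (x, t) = 0"
begin

lemma U_dx: "((\<lambda>x. U (x, t)) has_real_derivative U1 (x, t)) (at x)"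
  using has_real_derivative_fst_slice[OF U_deriv] .

lemma U_dt: "((\<lambda>t. U (x, t)) has_real_derivative U2 (x, t)) (at t)"
  using has_real_derivative_snd_slice[OF U_deriv] .

lemma U1_dx: "((\<lambda>x. U1 (x, t)) has_real_derivative U11 (x, t)) (at x)"
  using has_real_derivative_fst_slice[OF U1_deriv] .

lemma U1_dt: "((\<lambda>t. U1 (x, t)) has_real_derivative U12 (x, t)) (at t)"
  using has_real_derivative_snd_slice[OF U1_deriv] .

lemma U2_dx: "((\<lambda>x. U2 (x, t)) has_real_derivative U21 (x, t)) (at x)"
  using has_real_derivative_fst_slice[OF U2_deriv] .

lemma U2_dt: "((\<lambda>t. U2 (x, t)) has_real_derivative U22 (x, t)) (at t)"
  using has_real_derivative_snd_slice[OF U2_deriv] .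

lemma U_cont: "continuous_on UNIV U"
  using U_deriv by (metis continuous_at_imp_continuous_on has_derivative_continuous)

lemma U1_cont: "continuous_on UNIV U1"
  using U1_deriv by (metis continuous_at_imp_continuous_on has_derivative_continuous)

lemma U2_cont: "continuous_on UNIV U2"
  using U2_deriv by (metis continuous_at_imp_continuous_on has_derivative_continuous)

lemma A_cont: "continuous_on S A"
  using A_deriv by (meson DERIV_isCont continuous_at_imp_continuous_on)

lemma Ainf_pos: "0 < Ainf"
  using A_pos[of "l + 1"] A_beyond[of "l + 1"] by simp

lemma mixed_partials_integral:
  assumes "x0 \<le> z"
  shows "U2 (z, t) - U2 (x0, t) = integral {x0..z} (\<lambda>y. U12 (y, t))"
proof -
  have "((\<lambda>y. U1 (y, s)) has_integral U (z, s) - U (x0, s)) {x0..z}" for s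
    by (rule has_integral_real_derivative_interior[OF assms])
       (auto intro: continuous_on_fst_slice U_cont U_dx)
  then have "U (z, s) - U (x0, s) = integral {x0..z} (\<lambda>y. U1 (y, s))" for s
    by (rule integral_unique[symmetric])
  then have "(\<lambda>s. U (z, s) - U (x0, s)) = (\<lambda>s. integral {x0..z} (\<lambda>y. U1 (y, s)))"
    by (rule ext)
  moreover have "((\<lambda>s. U (z, s) - U (x0, s)) has_real_derivative U2 (z, t) - U2 (x0, t)) (at t)"
    by (intro derivative_intros U_dt)
  moreover have "((\<lambda>s. integral {x0..z} (\<lambda>y. U1 (y, s))) has_real_derivative
                    integral {x0..z} (\<lambda>y. U12 (y, t))) (at t)"
    by (rule has_real_derivative_parametric_integral[where fs="\<lambda>s y. U12 (y, s)"])
       (auto intro: U1_dt continuous_on_fst_slice U1_cont continuous_on_comp_swap U12_cont)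
  ultimately show ?thesis
    using DERIV_unique by metis
qed

lemma mixed_partials_eq: "U21 p = U12 p"
proof -
  obtain x t where p: "p = (x, t)" by fastforce
  let ?F = "\<lambda>z. U2 (x - 1, t) + integral {x - 1..z} (\<lambda>y. U12 (y, t))"
  have "((\<lambda>z. integral {x - 1..z} (\<lambda>y. U12 (y, t))) has_real_derivative U12 (x, t))
          (at x within {x - 1..x + 1})"
    by (rule integral_has_real_derivative) (auto intro: continuous_on_fst_slice U12_cont)
  then have "(?F has_real_derivative U12 (x, t)) (at x within {x - 1..x + 1})"
    by (auto intro!: derivative_eq_intros)
  then have D12: "(?F has_real_derivative U12 (x, t)) (at x)"
    by (simp add: at_within_Icc_at)
  have F_eq: "U2 (z, t) = ?F z" if "x - 1 \<le> z" for z
    using mixed_partials_integral[OF that, of t] by simp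
  have D21: "(?F has_real_derivative U21 (x, t)) (at x)"
    by (rule has_field_derivative_transform_within_open[OF U2_dx, where S="{x - 1<..<x + 1}"])
       (auto intro: F_eq)
  show ?thesis
    using p DERIV_unique[OF D21 D12] by simp
qed

lemma U_past: "0 \<le> x \<Longrightarrow> t \<le> 0 \<Longrightarrow> U (x, t) = 0"
  by (rule continuous_constant_on_closure[OF continuous_on_subset[OF U_cont subset_UNIV] _
        closure_quadrant]) (auto intro: past)

lemma U1_past: "0 \<le> x \<Longrightarrow> t \<le> 0 \<Longrightarrow> U1 (x, t) = 0"
proof (rule continuous_constant_on_closure[OF continuous_on_subset[OF U1_cont subset_UNIV] _
      closure_quadrant])
  fix z :: "real \<times> real" assume "z \<in> {0<..} \<times> {..<0}"
  then obtain x t where z: "z = (x, t)" "0 < x" "t < 0" by auto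
  have "U1 (x, t) = 0"
    by (rule has_real_derivative_locally_zero[OF U_dx, where S="{0<..}"]) (use z past in auto)
  then show "U1 z = 0" using z by simp
qed

lemma U2_past: "0 \<le> x \<Longrightarrow> t \<le> 0 \<Longrightarrow> U2 (x, t) = 0"
proof (rule continuous_constant_on_closure[OF continuous_on_subset[OF U2_cont subset_UNIV] _
      closure_quadrant])
  fix z :: "real \<times> real" assume "z \<in> {0<..} \<times> {..<0}"
  then obtain x t where z: "z = (x, t)" "0 < x" "t < 0" by auto
  have "U2 (x, t) = 0"
    by (rule has_real_derivative_locally_zero[OF U_dt, where S="{..<0}"]) (use z past in auto)
  then show "U2 z = 0" using z by simp
qed

lemma wave_up_to_boundary:
  assumes "0 \<le> x"
  shows "A x * U22 (x, t) = A x * U11 (x, t) + A' x * U1 (x, t)"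
proof -
  let ?F = "\<lambda>z. A (fst z) * U22 z - A (fst z) * U11 z - A' (fst z) * U1 z"
  have "continuous_on (closure ({0<..} \<times> UNIV)) ?F"
    by (intro continuous_intros continuous_on_compose2[OF A_cont] continuous_on_compose2[OF A'_cont]
          continuous_on_subset[OF U22_cont] continuous_on_subset[OF U11_cont]
          continuous_on_subset[OF U1_cont]) auto
  moreover have "?F z = 0" if "z \<in> {0<..} \<times> UNIV" for z
    using that wave[of "fst z" "snd z"] A_pos[of "fst z"] by (auto simp: field_simps)
  moreover have "(x, t) \<in> closure ({0<..} \<times> UNIV)"
    using assms by (simp add: closure_Times)
  ultimately have "?F (x, t) = 0"
    by (rule continuous_constant_on_closure)
  then show ?thesis by simp
qed

lemma A'_beyond: "l < x \<Longrightarrow> A' x = 0"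
  using has_real_derivative_locally_zero[OF DERIV_diff[OF A_deriv DERIV_const[of Ainf]], of "{l<..}"]
    A_beyond by simp

text \<open>Beyond l the equation is the flat wave equation, so U1 + U2 is constant along the
  characteristic s \<mapsto> (x + s, t - s), which runs into the region where U vanishes.\<close>
lemma outgoing: "l < x \<Longrightarrow> U1 (x, t) + U2 (x, t) = 0"
proof -
  assume x: "l < x"
  define g where "g s = U1 (x + s, t - s) + U2 (x + s, t - s)" for s
  have path: "((\<lambda>s. (x + s, t - s)) has_derivative (\<lambda>e. (e, - e))) (at s)" for s
    by (auto intro!: derivative_eq_intros)
  have g_deriv: "(g has_real_derivative
          U11 (x + s, t - s) - U12 (x + s, t - s) + U21 (x + s, t - s) - U22 (x + s, t - s)) (at s)"
    for s
    using has_derivative_add[OF has_derivative_compose[OF path spec[OF U1_deriv]]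
                                has_derivative_compose[OF path spec[OF U2_deriv]]]
    unfolding g_def has_field_derivative_def
    by (rule has_derivative_eq_rhs) (auto simp: algebra_simps)
  moreover have "U11 (x + s, t - s) - U12 (x + s, t - s) + U21 (x + s, t - s) - U22 (x + s, t - s) = 0"
    if "0 < s" for s
    using that x l_pos wave_up_to_boundary[of "x + s" "t - s"] A'_beyond[of "x + s"]
      A_pos[of "x + s"] mixed_partials_eq[of "(x + s, t - s)"] by simp
  ultimately have "(g has_real_derivative 0) (at s)" if "0 < s" for s
    using that by metis
  then have "g (\<bar>t\<bar> + 1) = g 0"
    using g_deriv by (intro DERIV_isconst_end[of 0 "\<bar>t\<bar> + 1" g])
       (auto intro: continuous_at_imp_continuous_on DERIV_isCont)
  moreover have "g (\<bar>t\<bar> + 1) = 0"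
    unfolding g_def using U1_past U2_past x l_pos by auto
  ultimately show ?thesis unfolding g_def by simp
qed

definition L :: real where "L = l + 1"

lemma L_pos: "0 < L" and L_beyond: "l < L"
  unfolding L_def using l_pos by auto

lemma conservation:
  "Ainf * U (L, t) + integral {0..L} (\<lambda>x. A x * U2 (x, t)) + (LBINT s=0..t. \<phi> s) = 0"
proof -
  define G where
    "G t = Ainf * U (L, t) + integral {0..L} (\<lambda>x. A x * U2 (x, t)) + (LBINT s=0..t. \<phi> s)" for t
  have flux: "integral {0..L} (\<lambda>x. A x * U22 (x, t)) = A L * U1 (L, t) - A 0 * U1 (0, t)" for t
  proof -
    have "((\<lambda>x. A x * U1 (x, t)) has_real_derivative A x * U22 (x, t)) (at x)" if "0 < x" for x
      using DERIV_mult[OF A_deriv U1_dx] wave_up_to_boundary[of x t] that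
      by (simp add: algebra_simps)
    then have "((\<lambda>x. A x * U22 (x, t)) has_integral A L * U1 (L, t) - A 0 * U1 (0, t)) {0..L}"
      using L_pos by (intro has_integral_real_derivative_interior continuous_intros A_cont
          continuous_on_fst_slice U1_cont) auto
    then show ?thesis by (rule integral_unique)
  qed
  have "(G has_real_derivative Ainf * U2 (L, t) + integral {0..L} (\<lambda>x. A x * U22 (x, t)) + \<phi> t) (at t)"
    for t
    unfolding G_def
    by (intro DERIV_add DERIV_cmult U_dt U2_dt interval_integral_has_real_derivative \<phi>_cont
          has_real_derivative_parametric_integral[where fs="\<lambda>s x. A x * U22 (x, s)"]
          continuous_intros A_cont continuous_on_fst_slice U2_cont continuous_on_comp_swap
          continuous_on_snd_comp U22_cont)
  moreover have "Ainf * U2 (L, t) + integral {0..L} (\<lambda>x. A x * U22 (x, t)) + \<phi> t = 0" for t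
  proof -
    have "U2 (L, t) = - U1 (L, t)"
      using outgoing[OF L_beyond, of t] by linarith
    then show ?thesis
      using flux[of t] A_beyond[OF L_beyond] A_0 neumann[of t] by simp
  qed
  ultimately have "G t = G 0"
    by (metis DERIV_isconst_all)
  also have "G 0 = 0"
  proof -
    have "integral {0..L} (\<lambda>x. A x * U2 (x, 0)) = integral {0..L} (\<lambda>x. 0)"
      by (rule integral_cong) (simp add: U2_past)
    then show ?thesis
      unfolding G_def using U_past[of L 0] L_pos by (simp add: zero_ereal_def)
  qed
  finally show ?thesis unfolding G_def .
qed

lemma trace_identity:
  "U (0, t) - (- (1 / Ainf) * (LBINT s=0..t. \<phi> s))
     = - integral {0..L} (\<lambda>x. U1 (x, t) + (1 / Ainf) * (A x * U2 (x, t)))"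
proof -
  have "integral {0..L} (\<lambda>x. U1 (x, t)) = U (L, t) - U (0, t)"
    using L_pos by (intro integral_unique has_integral_real_derivative_interior U_dx
        continuous_on_fst_slice U_cont) auto
  moreover have "integral {0..L} (\<lambda>x. U1 (x, t) + (1 / Ainf) * (A x * U2 (x, t)))
      = integral {0..L} (\<lambda>x. U1 (x, t)) + (1 / Ainf) * integral {0..L} (\<lambda>x. A x * U2 (x, t))"
  proof -
    have "(\<lambda>x. U1 (x, t)) integrable_on {0..L}"
      "(\<lambda>x. (1 / Ainf) * (A x * U2 (x, t))) integrable_on {0..L}"
      by (intro integrable_continuous_interval continuous_intros A_cont continuous_on_fst_slice
          U1_cont U2_cont)+
    then show ?thesis
      by (simp add: integral_add)
  qed
  moreover have "(LBINT s=0..t. \<phi> s) = - Ainf * U (L, t) - integral {0..L} (\<lambda>x. A x * U2 (x, t))"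
    using conservation[of t] by linarith
  then have "(1 / Ainf) * (LBINT s=0..t. \<phi> s)
      = - U (L, t) - (1 / Ainf) * integral {0..L} (\<lambda>x. A x * U2 (x, t))"
    using Ainf_pos by (simp add: field_simps)
  ultimately show ?thesis
    by linarith
qed


definition energy_density :: "(real \<Rightarrow> real) \<Rightarrow> real \<Rightarrow> real \<Rightarrow> real" where
  "energy_density h t x =
     A x * ((1 + h x) * (U1 (x, t) + U2 (x, t))^2 + (1 - h x) * (U2 (x, t) - U1 (x, t))^2)"

definition energy_density_rate :: "(real \<Rightarrow> real) \<Rightarrow> real \<Rightarrow> real \<Rightarrow> real" where
  "energy_density_rate h t x =
     A x * ((1 + h x) * (2 * (U1 (x, t) + U2 (x, t)) * (U12 (x, t) + U22 (x, t)))
            + (1 - h x) * (2 * (U2 (x, t) - U1 (x, t)) * (U22 (x, t) - U12 (x, t))))"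

definition energy :: "(real \<Rightarrow> real) \<Rightarrow> real \<Rightarrow> real" where
  "energy h t = integral {0..L} (energy_density h t)"

definition energy_flux :: "(real \<Rightarrow> real) \<Rightarrow> real \<Rightarrow> real \<Rightarrow> real" where
  "energy_flux h t x =
     A x * ((1 + h x) * (U1 (x, t) + U2 (x, t))^2 - (1 - h x) * (U2 (x, t) - U1 (x, t))^2)"

lemma energy_density_has_integral:
  "continuous_on {0..L} h \<Longrightarrow> (energy_density h t has_integral energy h t) {0..L}"
  unfolding energy_def energy_density_def
  by (intro integrable_integral integrable_continuous_interval continuous_intros A_cont
      continuous_on_fst_slice U1_cont U2_cont)

lemma energy_past: "t \<le> 0 \<Longrightarrow> energy h t = 0"
  unfolding energy_def
  by (subst integral_cong[where g="\<lambda>x. 0"]) (auto simp: energy_density_def U1_past U2_past)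

lemma energy_has_derivative:
  assumes h: "continuous_on UNIV h"
  shows "(energy h has_real_derivative integral {0..L} (energy_density_rate h t)) (at t)"
  unfolding energy_def
proof (rule has_real_derivative_parametric_integral)
  show "((\<lambda>s. energy_density h s x) has_real_derivative energy_density_rate h s x) (at s)" for s x
    unfolding energy_density_def energy_density_rate_def
    by (auto intro!: derivative_eq_intros U1_dt U2_dt simp: power2_eq_square algebra_simps)
  show "continuous_on UNIV (\<lambda>z. energy_density_rate h (fst z) (snd z))"
    unfolding energy_density_rate_def
    by (intro continuous_intros continuous_on_snd_comp continuous_on_comp_swap
        A_cont h U1_cont U2_cont U12_cont U22_cont)
  show "continuous_on {0..L} (energy_density h s)" for s
    unfolding energy_density_def
    by (intro continuous_intros A_cont continuous_on_subset[OF h] continuous_on_fst_slice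
        U1_cont U2_cont) auto
qed

lemma energy_flux_has_derivative:
  assumes h: "(h has_real_derivative nu * h x) (at x)" and x: "0 \<le> x"
  shows "(energy_flux h t has_real_derivative energy_density_rate h t x
            + 2 * h x * A' x * (U1 (x, t) + U2 (x, t)) * (U2 (x, t) - U1 (x, t))
            + A x * nu * h x * ((U1 (x, t) + U2 (x, t))^2 + (U2 (x, t) - U1 (x, t))^2)) (at x)"
proof -
  have flux_deriv: "(energy_flux h t has_real_derivative
          A' x * ((1 + h x) * (U1 (x, t) + U2 (x, t))^2 - (1 - h x) * (U2 (x, t) - U1 (x, t))^2)
          + A x * (nu * h x * (U1 (x, t) + U2 (x, t))^2
                   + (1 + h x) * (2 * (U1 (x, t) + U2 (x, t)) * (U11 (x, t) + U12 (x, t)))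
                   + nu * h x * (U2 (x, t) - U1 (x, t))^2
                   - (1 - h x) * (2 * (U2 (x, t) - U1 (x, t)) * (U12 (x, t) - U11 (x, t))))) (at x)"
    unfolding energy_flux_def
    by (auto intro!: derivative_eq_intros h U1_dx U2_dx A_deriv
        simp: mixed_partials_eq algebra_simps power2_eq_square)
  have "A x * U22 (x, t) = A x * U11 (x, t) + A' x * U1 (x, t)"
    using x by (rule wave_up_to_boundary)
  then show ?thesis
    unfolding energy_density_rate_def by (intro DERIV_cong[OF flux_deriv]) algebra
qed

lemma energy_flux_boundary:
  assumes "\<phi> t = 0" "0 \<le> h 0" "h L \<le> 1"
  shows "energy_flux h t L \<le> energy_flux h t 0"
proof -
  have "energy_flux h t L = - (A L * ((1 - h L) * (U2 (L, t) - U1 (L, t))^2))"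
    using outgoing[OF L_beyond, of t] by (simp add: energy_flux_def)
  also have "\<dots> \<le> 0"
    using A_pos[of L] assms(3) by simp
  also have "0 \<le> energy_flux h t 0"
    using neumann[of t] assms(1,2) A_0 mult_right_mono[of "1 - h 0" "1 + h 0" "(U2 (0, t))^2"]
    by (simp add: energy_flux_def)
  finally show ?thesis .
qed

lemma energy_rate_le:
  assumes A'_le: "\<And>x. x \<in> {0..L} \<Longrightarrow> \<bar>A' x\<bar> \<le> nu * A x / 2"
    and nu: "0 < nu" and delta: "0 < delta" "delta * exp (nu * L) \<le> 1/2" and "\<phi> t = 0"
  defines "h \<equiv> \<lambda>x. delta * exp (nu * x)"
  shows "integral {0..L} (energy_density_rate h t) \<le> - (nu * delta / 4) * energy h t"
proof -
  define D where "D x = 2 * h x * A' x * (U1 (x, t) + U2 (x, t)) * (U2 (x, t) - U1 (x, t))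
      + A x * nu * h x * ((U1 (x, t) + U2 (x, t))^2 + (U2 (x, t) - U1 (x, t))^2)" for x
  have h_deriv: "(h has_real_derivative nu * h x) (at x)" for x
    unfolding h_def by (auto intro!: derivative_eq_intros)
  have h_cont: "continuous_on S h" for S
    unfolding h_def by (intro continuous_intros)
  have flux_deriv: "(energy_flux h t has_real_derivative energy_density_rate h t x + D x) (at x)"
    if "0 \<le> x" for x
    unfolding D_def using energy_flux_has_derivative[OF h_deriv that] by (simp add: add.assoc)
  have "((\<lambda>x. energy_density_rate h t x + D x) has_integral
          energy_flux h t L - energy_flux h t 0) {0..L}"
    using L_pos flux_deriv
    by (intro has_integral_real_derivative_interior)
       (auto intro!: continuous_at_imp_continuous_on DERIV_isCont)
  then have bound_integral:
    "((\<lambda>x. (energy_density_rate h t x + D x) + - (nu * delta / 4) * energy_density h t x)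
               has_integral (energy_flux h t L - energy_flux h t 0) + - (nu * delta / 4) * energy h t)
             {0..L}"
    by (intro has_integral_add has_integral_mult_right energy_density_has_integral h_cont)
  have pointwise: "energy_density_rate h t x
                   \<le> (energy_density_rate h t x + D x) + - (nu * delta / 4) * energy_density h t x"
    if "x \<in> {0..L}" for x
  proof -
    have "- D x = - 2 * h x * A' x * (U1 (x, t) + U2 (x, t)) * (U2 (x, t) - U1 (x, t))
                  - A x * nu * h x * ((U1 (x, t) + U2 (x, t))^2 + (U2 (x, t) - U1 (x, t))^2)"
      unfolding D_def by (simp add: algebra_simps)
    also have "\<dots> \<le> - (nu * delta / 4) * energy_density h t x"
      unfolding energy_density_def
      by (rule energy_density_dissipation)
         (use A_pos A'_le[OF that] delta exp_weight_bounds[OF nu delta that] in \<open>auto simp: h_def\<close>)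
    finally show ?thesis
      by linarith
  qed
  have rate_integral:
    "(energy_density_rate h t has_integral integral {0..L} (energy_density_rate h t)) {0..L}"
    unfolding energy_density_rate_def
    by (intro integrable_integral integrable_continuous_interval continuous_intros A_cont h_cont
        continuous_on_fst_slice U1_cont U2_cont U12_cont U22_cont)
  have "integral {0..L} (energy_density_rate h t)
          \<le> (energy_flux h t L - energy_flux h t 0) + - (nu * delta / 4) * energy h t"
    by (rule has_integral_le[OF rate_integral bound_integral pointwise])
  moreover have "energy_flux h t L \<le> energy_flux h t 0"
    using \<open>\<phi> t = 0\<close> exp_weight_bounds[OF nu delta, of 0] exp_weight_bounds[OF nu delta, of L]
      delta L_pos unfolding h_def by (intro energy_flux_boundary) auto
  ultimately show ?thesis
    by linarith
qed

lemma coefficient_bounds: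
  obtains Amin Amax nu where
    "\<And>x. x \<in> {0..L} \<Longrightarrow> Amin \<le> A x \<and> A x \<le> Amax \<and> \<bar>A' x\<bar> \<le> nu * A x / 2"
    "0 < Amin" "0 < nu"
proof -
  have L: "compact {0..L}" "{0..L} \<noteq> {}" using L_pos by auto
  obtain x0 where x0: "\<And>x. x \<in> {0..L} \<Longrightarrow> A x0 \<le> A x"
    using continuous_attains_inf[OF L A_cont] by blast
  obtain x1 where x1: "\<And>x. x \<in> {0..L} \<Longrightarrow> A x \<le> A x1"
    using continuous_attains_sup[OF L A_cont] by blast
  obtain x2 where x2: "\<And>x. x \<in> {0..L} \<Longrightarrow> \<bar>A' x\<bar> \<le> \<bar>A' x2\<bar>"
    using continuous_attains_sup[OF L, of "\<lambda>x. \<bar>A' x\<bar>"] continuous_on_subset[OF A'_cont]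
    by (metis continuous_on_rabs subset_UNIV)
  define nu where "nu = 2 * \<bar>A' x2\<bar> / A x0 + 1"
  have "0 < A x0" "0 < nu"
    using A_pos[of x0] unfolding nu_def by (auto intro: add_nonneg_pos)
  then show ?thesis
  proof (intro that)
    fix x assume x: "x \<in> {0..L}"
    have "\<bar>A' x2\<bar> \<le> nu * A x0 / 2"
      using A_pos[of x0] unfolding nu_def by (simp add: field_simps)
    also have "\<dots> \<le> nu * A x / 2"
      using x0[OF x] \<open>0 < nu\<close> by simp
    finally show "A x0 \<le> A x \<and> A x \<le> A x1 \<and> \<bar>A' x\<bar> \<le> nu * A x / 2"
      using x0[OF x] x1[OF x] x2[OF x] by linarith
  qed
qed

lemma energy_exponential_decay:
  assumes nu: "0 < nu" and A'_le: "\<And>x. x \<in> {0..L} \<Longrightarrow> \<bar>A' x\<bar> \<le> nu * A x / 2"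
  obtains h kappa B where "continuous_on {0..L} h" "\<And>x. x \<in> {0..L} \<Longrightarrow> 0 \<le> h x \<and> h x \<le> 1/2"
    "0 < kappa" "0 \<le> B" "\<And>t. energy h t \<le> B * exp (- kappa * t)"
proof -
  define delta where "delta = exp (- (nu * L)) / 2"
  define h where "h x = delta * exp (nu * x)" for x
  have delta: "0 < delta" "delta * exp (nu * L) \<le> 1/2"
    unfolding delta_def by (auto simp: exp_minus field_simps)
  have h_cont: "continuous_on S h" for S
    unfolding h_def by (intro continuous_intros)
  have "\<exists>E'. (energy h has_real_derivative E') (at t) \<and>
          (max b 0 < t \<longrightarrow> E' \<le> - (nu * delta / 4) * energy h t)" for t
    using energy_has_derivative[OF h_cont] energy_rate_le[OF A'_le nu delta] \<phi>_late
    unfolding h_def by auto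
  then obtain B where "0 \<le> B" "\<And>t. energy h t \<le> B * exp (- (nu * delta / 4) * t)"
    using exponential_decay_of_dissipative[of "energy h" "max b 0" "nu * delta / 4"]
      energy_past nu delta by auto
  moreover have "0 \<le> h x \<and> h x \<le> 1/2" if "x \<in> {0..L}" for x
    using exp_weight_bounds[OF nu delta that] delta unfolding h_def by auto
  ultimately show ?thesis
    using nu delta h_cont by (intro that[of h "nu * delta / 4" B]) auto
qed

lemma trace_error_le_energy:
  assumes Amin: "0 < Amin" and A_bounds: "\<And>x. x \<in> {0..L} \<Longrightarrow> Amin \<le> A x \<and> A x \<le> Amax"
    and h: "continuous_on {0..L} h" "\<And>x. x \<in> {0..L} \<Longrightarrow> 0 \<le> h x \<and> h x \<le> 1/2"
    and lam: "0 < lam"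
  shows "\<bar>U (0, t) - (- (1 / Ainf) * (LBINT s=0..t. \<phi> s))\<bar>
           \<le> (1 + Amax / Ainf) * (lam / Amin * energy h t + L / lam)"
proof -
  define F where "F x = U1 (x, t) + (1 / Ainf) * (A x * U2 (x, t))" for x
  define G where "G x = (1 + Amax / Ainf) * (lam / Amin * energy_density h t x + 1 / lam)" for x
  have "F integrable_on {0..L}"
    unfolding F_def using Ainf_pos by (intro integrable_continuous_interval continuous_intros A_cont
        continuous_on_fst_slice U1_cont U2_cont) auto
  moreover have "(G has_integral (1 + Amax / Ainf) * (lam / Amin * energy h t + L / lam)) {0..L}"
    unfolding G_def
    using has_integral_const_real[of "1 / lam" 0 L] L_pos
    by (intro has_integral_mult_right has_integral_add energy_density_has_integral h) auto
  moreover have "norm (F x) \<le> G x" if "x \<in> {0..L}" for x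
    unfolding F_def G_def energy_density_def
    using abs_trace_integrand_le[OF Amin _ _ Ainf_pos _ _ lam] A_bounds[OF that] h(2)[OF that] by auto
  ultimately have "norm (integral {0..L} F) \<le> (1 + Amax / Ainf) * (lam / Amin * energy h t + L / lam)"
    by (metis has_integral_integrable integral_unique integral_norm_bound_integral)
  then show ?thesis
    unfolding trace_identity F_def by simp
qed

theorem trace_exponential_decay:
  "\<exists>C C'. 0 < C \<and> 0 < C' \<and>
     (\<forall>t. \<bar>U (0, t) - (- (1 / Ainf) * (LBINT s=0..t. \<phi> s))\<bar> \<le> C * exp (- C' * t))"
proof -
  obtain Amin Amax nu
    where A_bounds: "\<And>x. x \<in> {0..L} \<Longrightarrow> Amin \<le> A x \<and> A x \<le> Amax \<and> \<bar>A' x\<bar> \<le> nu * A x / 2"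
      and Amin: "0 < Amin" and nu: "0 < nu"
    using coefficient_bounds by blast
  obtain h kappa B where h: "continuous_on {0..L} h" "\<And>x. x \<in> {0..L} \<Longrightarrow> 0 \<le> h x \<and> h x \<le> 1/2"
    and kappa: "0 < kappa" and B: "0 \<le> B" and decay: "\<And>t. energy h t \<le> B * exp (- kappa * t)"
    using energy_exponential_decay[OF nu] A_bounds by metis
  define K where "K = 1 + Amax / Ainf"
  have K: "0 < K"
    using A_bounds[of 0] L_pos A_pos[of 0] Ainf_pos unfolding K_def by (auto intro: add_pos_nonneg)
  have "\<bar>U (0, t) - (- (1 / Ainf) * (LBINT s=0..t. \<phi> s))\<bar> \<le> K * (B / Amin + L) * exp (- (kappa / 2) * t)"
    for t
  proof -
    define lam where "lam = exp (kappa * t / 2)"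
    have "\<bar>U (0, t) - (- (1 / Ainf) * (LBINT s=0..t. \<phi> s))\<bar> \<le> K * (lam / Amin * energy h t + L / lam)"
      unfolding K_def lam_def using Amin A_bounds h by (intro trace_error_le_energy) auto
    also have "\<dots> \<le> K * (lam / Amin * (B * exp (- kappa * t)) + L / lam)"
      using decay[of t] K Amin unfolding lam_def by (intro mult_left_mono add_right_mono) auto
    also have "\<dots> = K * (B / Amin + L) * exp (- (kappa / 2) * t)"
      unfolding lam_def by (simp add: field_simps exp_minus flip: exp_add)
    finally show ?thesis .
  qed
  moreover have "0 < K * (B / Amin + L)"
    using K B Amin L_pos by (simp add: add_nonneg_pos)
  ultimately show ?thesis
    using kappa by (metis half_gt_zero)
qed

end

lemma smooth_real_deriv: "smooth_real f \<Longrightarrow> smooth_real (deriv f)"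
  unfolding smooth_real_def by (metis funpow_Suc_right o_apply)

lemma smooth_real_has_derivative: "smooth_real f \<Longrightarrow> (f has_real_derivative deriv f x) (at x)"
  unfolding smooth_real_def by (metis DERIV_deriv_iff_real_differentiable funpow_0)

lemma smooth_real_continuous: "smooth_real f \<Longrightarrow> continuous_on UNIV f"
  by (meson DERIV_isCont continuous_at_imp_continuous_on smooth_real_has_derivative)

lemma smooth_plane_C2:
  assumes "smooth_plane U"
  obtains U1 U2 U11 U12 U21 U22 where
    "\<forall>p. (U has_derivative (\<lambda>h. U1 p * fst h + U2 p * snd h)) (at p)"
    "\<forall>p. (U1 has_derivative (\<lambda>h. U11 p * fst h + U12 p * snd h)) (at p)"
    "\<forall>p. (U2 has_derivative (\<lambda>h. U21 p * fst h + U22 p * snd h)) (at p)"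
    "continuous_on UNIV U11" "continuous_on UNIV U12" "continuous_on UNIV U22"
proof -
  have "Ck_plane 2 U" using assms unfolding smooth_plane_def by blast
  then show ?thesis
    using that by (auto simp: numeral_2_eq_2)
qed

lemma has_real_derivative_halfline_unique:
  fixes f g :: "real \<Rightarrow> real"
  assumes "(f has_real_derivative D) (at 0)" "(g has_real_derivative D') (at 0 within {0..})"
    and "\<And>x. 0 \<le> x \<Longrightarrow> f x = g x"
  shows "D = D'"
proof -
  have "(g has_real_derivative D) (at 0 within {0..})"
    using has_field_derivative_at_within[OF assms(1)]
    by (rule has_field_derivative_transform_within[of _ _ _ _ 1]) (use assms(3) in auto)
  moreover have "{0::real..} - {0} = {0<..}"
    by auto
  then have "at (0::real) within {0..} \<noteq> bot"
    by (simp add: at_within_eq_bot_iff)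
  ultimately show ?thesis
    using assms(2) has_field_derivative_unique by blast
qed

lemma boxA_of_extension:
  assumes extends: "\<And>x t. 0 \<le> x \<Longrightarrow> U (x, t) = u x t"
    and U_deriv: "\<forall>p. (U has_derivative (\<lambda>h. U1 p * fst h + U2 p * snd h)) (at p)"
    and U1_deriv: "\<forall>p. (U1 has_derivative (\<lambda>h. U11 p * fst h + U12 p * snd h)) (at p)"
    and U2_deriv: "\<forall>p. (U2 has_derivative (\<lambda>h. U21 p * fst h + U22 p * snd h)) (at p)"
    and A_deriv: "\<And>x. (A has_real_derivative A' x) (at x)"
    and x: "0 < x"
  shows "boxA A u x t = U22 (x, t) - (1 / A x) * (A' x * U1 (x, t) + A x * U11 (x, t))"
proof -
  have u_eq: "u x = (\<lambda>s. U (x, s))"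
    using x extends by fastforce
  have "deriv (u x) = (\<lambda>s. U2 (x, s))"
    unfolding u_eq by (rule ext) (rule DERIV_imp_deriv[OF has_real_derivative_snd_slice[OF U_deriv]])
  then have u_tt: "deriv (\<lambda>s. deriv (\<lambda>r. u x r) s) t = U22 (x, t)"
    using has_real_derivative_snd_slice[OF U2_deriv] by (simp add: DERIV_imp_deriv)
  have u_x: "deriv (\<lambda>z. u z t) y = U1 (y, t)" if "0 < y" for y
    by (intro DERIV_imp_deriv has_field_derivative_transform_within_open[where S="{0<..}",
          OF has_real_derivative_fst_slice[OF U_deriv]]) (use that extends in auto)
  have "((\<lambda>y. A y * U1 (y, t)) has_real_derivative A' x * U1 (x, t) + A x * U11 (x, t)) (at x)"
    using DERIV_mult[OF A_deriv has_real_derivative_fst_slice[OF U1_deriv]] by (simp add: mult.commute)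
  then have "((\<lambda>y. A y * deriv (\<lambda>z. u z t) y) has_real_derivative A' x * U1 (x, t) + A x * U11 (x, t))
               (at x)"
    by (rule has_field_derivative_transform_within_open[where S="{0<..}"]) (use x u_x in auto)
  then show ?thesis
    unfolding boxA_def u_tt by (simp add: DERIV_imp_deriv)
qed

lemma neumann_wave_of_smooth:
  assumes adm: "admissible A Ainf" and l_pos: "0 < l" and A_l: "\<And>x. l < x \<Longrightarrow> A x = Ainf"
    and phi_smooth: "smooth_real \<phi>" and phi_late: "\<And>t. b < t \<Longrightarrow> \<phi> t = 0"
    and U_smooth: "smooth_plane U" and extends: "\<And>x t. 0 \<le> x \<Longrightarrow> U (x, t) = u x t"
    and wave: "\<And>x t. 0 < x \<Longrightarrow> boxA A u x t = 0"
    and neumann: "\<And>t. ((\<lambda>x. u x t) has_real_derivative \<phi> t) (at 0 within {0..})"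
    and past: "\<And>x t. 0 < x \<Longrightarrow> t < 0 \<Longrightarrow> u x t = 0"
  shows "\<exists>U1 U2 U11 U12 U21 U22. neumann_wave A (deriv A) Ainf l b \<phi> U U1 U2 U11 U12 U21 U22"
proof -
  obtain U1 U2 U11 U12 U21 U22 where
    U_deriv: "\<forall>p. (U has_derivative (\<lambda>h. U1 p * fst h + U2 p * snd h)) (at p)"
    and U1_deriv: "\<forall>p. (U1 has_derivative (\<lambda>h. U11 p * fst h + U12 p * snd h)) (at p)"
    and U2_deriv: "\<forall>p. (U2 has_derivative (\<lambda>h. U21 p * fst h + U22 p * snd h)) (at p)"
    and cont: "continuous_on UNIV U11" "continuous_on UNIV U12" "continuous_on UNIV U22"
    using smooth_plane_C2[OF U_smooth] by blast
  have A: "smooth_real A" "\<And>x. 0 < A x" "A 0 = 1"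
    using adm unfolding admissible_def by auto
  have "U22 (x, t) = U11 (x, t) + deriv A x / A x * U1 (x, t)" if "0 < x" for x t
    using wave[OF that, of t] A(2)[of x]
      boxA_of_extension[OF extends U_deriv U1_deriv U2_deriv smooth_real_has_derivative[OF A(1)] that]
    by (simp add: field_simps)
  moreover have "U1 (0, t) = \<phi> t" for t
    using has_real_derivative_halfline_unique[OF has_real_derivative_fst_slice[OF U_deriv] neumann]
      extends by blast
  ultimately have "neumann_wave A (deriv A) Ainf l b \<phi> U U1 U2 U11 U12 U21 U22"
    using A l_pos A_l phi_late U_deriv U1_deriv U2_deriv cont past extends
      smooth_real_has_derivative[OF A(1)] smooth_real_continuous[OF smooth_real_deriv[OF A(1)]]
      smooth_real_continuous[OF phi_smooth]
    by (intro neumann_wave.intro) auto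
  then show ?thesis by blast
qed

theorem mainTheorem13:
  fixes A :: "real \<Rightarrow> real" and Ainf l :: real
    and \<phi> :: "real \<Rightarrow> real" and u :: "real \<Rightarrow> real \<Rightarrow> real"
  assumes adm: "admissible A Ainf"
    and l_pos: "l > 0"
    and A_l: "\<forall>x. x > l \<longrightarrow> A x = Ainf"
    and phi_smooth: "smooth_real \<phi>"
    and phi_supp: "\<exists>a b. 0 < a \<and> a \<le> b \<and> (\<forall>t. t \<notin> {a..b} \<longrightarrow> \<phi> t = 0)"
    and u_smooth: "smooth_halfplane u"
    and wave: "\<forall>x t. x > 0 \<longrightarrow> boxA A u x t = 0"
    and neumann: "\<forall>t. ((\<lambda>x. u x t) has_real_derivative \<phi> t) (at 0 within {0..})"
    and past: "\<forall>x t. x > 0 \<and> t < 0 \<longrightarrow> u x t = 0"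
  shows "\<exists>C C'. C > 0 \<and> C' > 0 \<and>
           (\<forall>t. \<bar>u 0 t - (- (1 / Ainf) * (LBINT s=0..t. \<phi> s))\<bar> \<le> C * exp (- C' * t))"
proof -
  obtain a b where "\<forall>t. t \<notin> {a..b} \<longrightarrow> \<phi> t = 0"
    using phi_supp by blast
  then have phi_late: "\<And>t. b < t \<Longrightarrow> \<phi> t = 0"
    by auto
  obtain U where U: "smooth_plane U" "\<And>x t. 0 \<le> x \<Longrightarrow> U (x, t) = u x t"
    using u_smooth unfolding smooth_halfplane_def by blast
  have "\<exists>U1 U2 U11 U12 U21 U22. neumann_wave A (deriv A) Ainf l b \<phi> U U1 U2 U11 U12 U21 U22"
    by (rule neumann_wave_of_smooth[OF adm l_pos _ phi_smooth phi_late U])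
       (use A_l wave neumann past in auto)
  then obtain U1 U2 U11 U12 U21 U22 where "neumann_wave A (deriv A) Ainf l b \<phi> U U1 U2 U11 U12 U21 U22"
    by blast
  then have "\<exists>C C'. 0 < C \<and> 0 < C' \<and>
               (\<forall>t. \<bar>U (0, t) - (- (1 / Ainf) * (LBINT s=0..t. \<phi> s))\<bar> \<le> C * exp (- C' * t))"
    by (rule neumann_wave.trace_exponential_decay)
  then show ?thesis
    using U(2)[of 0] by simp
qed

end
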